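(* Let $P$ be a point of $\mathrm{PG}(2,q^3)$ with $P\neq T$, $P$ not on the line $m_T$ and $P\notin\mathcal P_{2,q}$. Then $P$ lies in the Fig-block $\mathrm{Fig}(T)$ if and only if the projection of $\mathcal P_{2,q}$ from $P$ onto $m_T$, i.e. $\{PQ\cap m_T:Q\in\mathcal P_{2,q}\}$, is a $T$-sls (that is, one of the sets $\mathcal S_\theta=\{(x\theta,x^q,0):x\in\mathbb{F}_{q^3}^*\}$, $\theta\in\mathbb{F}_{q^3}^*$; equivalently a scattered $\mathbb{F}_q$-linear set of pseudoregulus type with transversal points $T^\phi$, $T^{\phi^2}$).
   Context: Let $q$ be a prime power, $\mathbb{F}_{q^3}^*=\mathbb{F}_{q^3}\setminus\{0\}$. Points of $\mathrm{PG}(2,q^3)$ have homogeneous coordinates $(x,y,z)$ and lines $[a,b,c]$. Let $\phi$ be the collineation $(x,y,z)\mapsto(z^q,x^q,y^q)$ (on lines $[d,e,f]\mapsto[f^q,d^q,e^q]$), whose fixed points form the subplane $\mathcal P_{2,q}=\{(x,x^q,x^{q^2}):x\in\mathbb{F}_{q^3}^*\}$. A point has Type II (resp. III) if its $\phi$-orbit is three collinear (resp. non-collinear) points; a line has Type III if its $\phi$-orbit is three non-concurrent lines. For a Type III point $X$, the Fig-block is $\mathrm{Fig}(X)=\mathcal E_X\cup\mathcal F_X$, where $\mathcal E_X$ is the set of Type II points on the line $X^\phi X^{\phi^2}$ and $\mathcal F_X=\{\ell^\phi\cap\ell^{\phi^2}:\ell\text{ a Type III line through }X\}$. Let $T=(0,0,1)$,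 $T^\phi=(1,0,0)$, $T^{\phi^2}=(0,1,0)$, and $m_T=T^\phi T^{\phi^2}$ the line $[0,0,1]$. *)

theory Defs
  imports "HOL-Computational_Algebra.Primes"
begin

(* Homogeneous coordinates of PG(2,F) are nonzero triples in F^3.
   A projective point (or line) is represented by the class of all nonzero
   scalar multiples of a representative vector. *)

type_synonym 'a vec3 = "'a \<times> 'a \<times> 'a"

definition sm3 :: "'a::field \<Rightarrow> 'a vec3 \<Rightarrow> 'a vec3" where
  "sm3 c v = (case v of (x, y, z) \<Rightarrow> (c * x, c * y, c * z))"

definition pt :: "'a::field vec3 \<Rightarrow> 'a vec3 set" where
  "pt v = {w. \<exists>c. c \<noteq> 0 \<and> w = sm3 c v}"

definition dot3 :: "'a::field vec3 \<Rightarrow> 'a vec3 \<Rightarrow> 'a" where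
  "dot3 u v = (case u of (a, b, c) \<Rightarrow> case v of (x, y, z) \<Rightarrow> a * x + b * y + c * z)"

(* cross product: line through two points / intersection point of two lines *)
definition cross3 :: "'a::field vec3 \<Rightarrow> 'a vec3 \<Rightarrow> 'a vec3" where
  "cross3 u v = (case u of (a, b, c) \<Rightarrow> case v of (d, e, f) \<Rightarrow>
      (b * f - c * e, c * d - a * f, a * e - b * d))"

definition det3 :: "'a::field vec3 \<Rightarrow> 'a vec3 \<Rightarrow> 'a vec3 \<Rightarrow> 'a" where
  "det3 u v w = dot3 u (cross3 v w)"

(* the collineation phi: (x,y,z) |-> (z^q, x^q, y^q); on lines the same formula *)
definition phi :: "nat \<Rightarrow> 'a::field vec3 \<Rightarrow> 'a vec3" where
  "phi q v = (case v of (x, y, z) \<Rightarrow> (z ^ q, x ^ q, y ^ q))"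

definition typeII_pt :: "nat \<Rightarrow> 'a::field vec3 \<Rightarrow> bool" where
  "typeII_pt q v \<longleftrightarrow> v \<noteq> (0, 0, 0) \<and>
     pt v \<noteq> pt (phi q v) \<and> pt v \<noteq> pt (phi q (phi q v)) \<and>
     pt (phi q v) \<noteq> pt (phi q (phi q v)) \<and>
     det3 v (phi q v) (phi q (phi q v)) = 0"

definition typeIII_pt :: "nat \<Rightarrow> 'a::field vec3 \<Rightarrow> bool" where
  "typeIII_pt q v \<longleftrightarrow> v \<noteq> (0, 0, 0) \<and> det3 v (phi q v) (phi q (phi q v)) \<noteq> 0"

definition typeIII_line :: "nat \<Rightarrow> 'a::field vec3 \<Rightarrow> bool" where
  "typeIII_line q l \<longleftrightarrow> l \<noteq> (0, 0, 0) \<and> det3 l (phi q l) (phi q (phi q l)) \<noteq> 0"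

(* the subplane P_{2,q} of phi-fixed points *)
definition subplane :: "nat \<Rightarrow> 'a::field vec3 set set" where
  "subplane q = {pt (x, x ^ q, x ^ (q ^ 2)) | x. x \<noteq> 0}"

definition E_blk :: "nat \<Rightarrow> 'a::field vec3 \<Rightarrow> 'a vec3 set set" where
  "E_blk q X = {pt w | w. typeII_pt q w \<and>
                  dot3 (cross3 (phi q X) (phi q (phi q X))) w = 0}"

definition F_blk :: "nat \<Rightarrow> 'a::field vec3 \<Rightarrow> 'a vec3 set set" where
  "F_blk q X = {pt (cross3 (phi q l) (phi q (phi q l))) | l.
                  typeIII_line q l \<and> dot3 l X = 0}"

definition Fig :: "nat \<Rightarrow> 'a::field vec3 \<Rightarrow> 'a vec3 set set" where
  "Fig q X = E_blk q X \<union> F_blk q X"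

definition Tpt :: "'a::field vec3" where
  "Tpt = (0, 0, 1)"

definition mT :: "'a::field vec3" where
  "mT = (0, 0, 1)"

definition proj_set :: "nat \<Rightarrow> 'a::field vec3 \<Rightarrow> 'a vec3 set set" where
  "proj_set q P = {pt (cross3 (cross3 P Q) mT) | Q. Q \<noteq> (0, 0, 0) \<and> pt Q \<in> subplane q}"

definition S_theta :: "nat \<Rightarrow> 'a::field \<Rightarrow> 'a vec3 set set" where
  "S_theta q \<theta> = {pt (x * \<theta>, x ^ q, 0) | x. x \<noteq> 0}"

definition T_sls :: "nat \<Rightarrow> 'a::field vec3 set set \<Rightarrow> bool" where
  "T_sls q S \<longleftrightarrow> (\<exists>\<theta>. \<theta> \<noteq> 0 \<and> S = S_theta q \<theta>)"

end

theory Submission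
  imports Defs "HOL-Computational_Algebra.Polynomial"
begin

(* Write P = (x, y, 1) and N a = a a^q a^(q^2) for the norm of F_(q^3) over F_q.  Both sides
   of the equivalence turn out to be equivalent to  x y^q = 1 and N x \<noteq> 1.

   Fig(T): the Type II points of E_T lie on m_T, and the lines through T are [d, e, 0]; such a
   line has Type III iff N d + N e \<noteq> 0, and then l^phi \<inter> l^(phi^2) is
   (d^q d^(q^2), e^q e^(q^2), -d^q e^(q^2)).

   Projection: the subplane point (t, t^q, t^(q^2)) projects to (A t, B t, 0) with
   A t = t - x t^(q^2) and B t = t^q - y t^(q^2).  If x y^q = 1 then A t = -x (B t)^q, and B is an
   F_q-linear bijection as soon as N x \<noteq> 1, so the projection is S_(-x).  Conversely, if the
   projection is S_theta then N (A t) = N theta N (B t) with B t \<noteq> 0.  By Hilbert 90 every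
   norm-one c is t^(q-1), and substituting turns the norm identity into a polynomial identity
   of degree at most q^2 + q in c that holds on all q^2 + q + 1 norm-one elements; comparing
   coefficients gives x y^q = 1, and N x \<noteq> 1 because B t never vanishes. *)

section \<open>Finite fields\<close>

lemma power_card_UNIV_eq_self:
  fixes x :: "'a::{finite,field}"
  shows "x ^ card (UNIV :: 'a set) = x"
proof (cases "x = 0")
  case False
  let ?U = "UNIV - {0::'a}"
  have "x ^ card ?U * \<Prod>?U = (\<Prod>y\<in>?U. x * y)"
    by (simp add: prod.distrib)
  also have "\<dots> = \<Prod>?U"
    by (rule prod.reindex_bij_witness[of _ "\<lambda>y. y / x" "\<lambda>y. x * y"]) (use False in auto)
  finally have "x ^ card ?U = 1"
    by simp
  moreover have "card ?U + 1 = card (UNIV :: 'a set)"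
    using finite_UNIV_card_ge_0[where ?'a = 'a] by (simp add: card_Diff_singleton)
  ultimately show ?thesis
    by (metis power_add power_one_right mult_1)
qed (simp add: finite_UNIV_card_ge_0)

lemma of_nat_card_UNIV_eq_0: "of_nat (card (UNIV :: 'a::{finite,ring_1} set)) = (0::'a)"
proof -
  have "(\<Sum>x\<in>UNIV. x + 1) = (\<Sum>x\<in>UNIV. x :: 'a)"
    by (rule sum.reindex_bij_witness[of _ "\<lambda>y. y - 1" "\<lambda>y. y + 1"]) auto
  then show ?thesis
    by (simp add: sum.distrib)
qed

lemma card_power_eq_le:
  fixes c :: "'a::idom"
  assumes "n > 0"
  shows "card {x. x ^ n = c} \<le> n"
proof -
  let ?p = "monom 1 n - monom c 0"
  have "coeff ?p n = 1"
    using assms by simp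
  then have "?p \<noteq> 0"
    by (metis coeff_0 zero_neq_one)
  then have "card {x. poly ?p x = 0} \<le> degree ?p"
    by (rule card_poly_roots_bound)
  also have "degree ?p \<le> n"
    by (rule degree_le) (use assms in auto)
  finally show ?thesis
    by (simp add: poly_monom)
qed

lemma Setcompr_nonzero_bij:
  fixes B :: "'a::zero \<Rightarrow> 'a"
  assumes "bij B" and "B 0 = 0"
  shows "{f (B t) | t. t \<noteq> 0} = {f u | u. u \<noteq> 0}"
proof -
  have "B t \<noteq> 0 \<longleftrightarrow> t \<noteq> 0" for t
    using assms by (metis bij_def injD)
  moreover have "\<exists>t. u = B t" for u
    using assms by (metis bij_def surjD)
  ultimately show ?thesis
    by auto metis
qed

lemma CHAR_eq_if_card_eq_prime_power:
  assumes "prime p" "card (UNIV :: 'a::{finite,field} set) = p ^ n"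
  shows "CHAR('a) = p"
proof -
  have "prime CHAR('a)"
    by (intro prime_CHAR_semidom finite_imp_CHAR_pos) simp
  moreover have "CHAR('a) dvd p"
    using of_nat_card_UNIV_eq_0[where ?'a = 'a] assms(2) by (simp add: of_nat_eq_0_iff_char_dvd)
  ultimately show ?thesis
    using assms(1) primes_dvd_imp_eq by blast
qed

section \<open>The norm of a cubic extension\<close>

definition field_norm :: "nat \<Rightarrow> 'a::field \<Rightarrow> 'a" where
  "field_norm q a = a * a ^ q * (a ^ q) ^ q"

lemma field_norm_mult: "field_norm q (a * b) = field_norm q a * field_norm q b"
  by (simp add: field_norm_def power_mult_distrib mult_ac)

lemma field_norm_power: "field_norm q (a ^ n) = field_norm q a ^ n"
proof -
  have "(b ^ n) ^ q = (b ^ q) ^ n" for b :: 'a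
    by (metis power_mult mult.commute)
  then show ?thesis
    by (simp add: field_norm_def power_mult_distrib)
qed

lemma field_norm_1 [simp]: "field_norm q 1 = 1"
  by (simp add: field_norm_def)

lemma field_norm_eq_0_iff: "q > 0 \<Longrightarrow> field_norm q a = 0 \<longleftrightarrow> a = 0"
  by (simp add: field_norm_def)

section \<open>Projective points, projections and the Fig-block of T\<close>

lemma sm3_apply [simp]: "sm3 c (x, y, z) = (c * x, c * y, c * z)"
  by (simp add: sm3_def)

lemma sm3_sm3: "sm3 a (sm3 b v) = sm3 (a * b) v"
  by (cases v) (simp add: mult.assoc)

lemma pt_sm3:
  assumes "c \<noteq> 0"
  shows "pt (sm3 c v) = pt v"
proof -
  have "(\<exists>d. d \<noteq> 0 \<and> w = sm3 (d * c) v) \<longleftrightarrow> (\<exists>d. d \<noteq> 0 \<and> w = sm3 d v)" for w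
    using assms by (metis divide_eq_0_iff nonzero_eq_divide_eq)
  then show ?thesis
    by (simp add: pt_def sm3_sm3)
qed

lemma pt_eq_iff: "pt u = pt v \<longleftrightarrow> (\<exists>c. c \<noteq> 0 \<and> u = sm3 c v)"
proof
  assume "pt u = pt v"
  moreover have "u \<in> pt u"
    unfolding pt_def by (cases u) (auto intro: exI[of _ 1])
  ultimately show "\<exists>c. c \<noteq> 0 \<and> u = sm3 c v"
    by (simp add: pt_def)
qed (auto simp: pt_sm3)

lemma cross3_sm3_left: "cross3 (sm3 c u) v = sm3 c (cross3 u v)"
  by (cases u, cases v) (simp add: cross3_def algebra_simps)

lemma cross3_sm3_right: "cross3 u (sm3 c v) = sm3 c (cross3 u v)"
  by (cases u, cases v) (simp add: cross3_def algebra_simps)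

lemma proj_set_sm3:
  assumes "c \<noteq> 0"
  shows "proj_set q (sm3 c v) = proj_set q v"
  using assms by (simp add: proj_set_def cross3_sm3_left pt_sm3)

lemma proj_set_affine:
  "proj_set q (x, y, 1) = {pt (t - x * (t ^ q) ^ q, t ^ q - y * (t ^ q) ^ q, 0) | t. t \<noteq> 0}"
proof (intro set_eqI iffI)
  have proj: "cross3 (cross3 (x, y, 1) (t, t ^ q, t ^ q\<^sup>2)) mT
      = (t - x * (t ^ q) ^ q, t ^ q - y * (t ^ q) ^ q, 0)" for t
    by (simp add: cross3_def mT_def power2_eq_square power_mult algebra_simps)
  fix X
  {
    assume "X \<in> proj_set q (x, y, 1)"
    then obtain Q t where X: "X = pt (cross3 (cross3 (x, y, 1) Q) mT)"
      and t: "t \<noteq> 0" "pt Q = pt (t, t ^ q, t ^ q\<^sup>2)"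
      unfolding proj_set_def subplane_def by auto
    then obtain k where "k \<noteq> 0" "Q = sm3 k (t, t ^ q, t ^ q\<^sup>2)"
      by (auto simp: pt_eq_iff)
    then have "X = pt (t - x * (t ^ q) ^ q, t ^ q - y * (t ^ q) ^ q, 0)"
      by (simp add: X cross3_sm3_right cross3_sm3_left pt_sm3 proj del: sm3_apply)
    with t(1) show "X \<in> {pt (t - x * (t ^ q) ^ q, t ^ q - y * (t ^ q) ^ q, 0) | t. t \<noteq> 0}"
      by blast
  next
    assume "X \<in> {pt (t - x * (t ^ q) ^ q, t ^ q - y * (t ^ q) ^ q, 0) | t. t \<noteq> 0}"
    then obtain t where "t \<noteq> 0" "X = pt (cross3 (cross3 (x, y, 1) (t, t ^ q, t ^ q\<^sup>2)) mT)"
      by (auto simp: proj)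
    then show "X \<in> proj_set q (x, y, 1)"
      unfolding proj_set_def subplane_def by auto
  }
qed

lemma S_theta_altdef: "S_theta q \<theta> = {pt (\<theta> * u ^ q, u, 0) | u. u \<noteq> 0}"
proof (intro set_eqI iffI)
  have inv: "pt (w * \<theta>, w ^ q, 0) = pt (\<theta> * (1 / w) ^ q, 1 / w, 0)" if "w \<noteq> 0" for w
  proof -
    have "(w * \<theta>, w ^ q, 0) = sm3 (w ^ Suc q) (\<theta> * (1 / w) ^ q, 1 / w, 0)"
      using that by (simp add: field_simps)
    moreover have "w ^ Suc q \<noteq> 0"
      using that by simp
    ultimately show ?thesis
      by (metis pt_sm3)
  qed
  fix X
  {
    assume "X \<in> S_theta q \<theta>"
    then obtain w where "w \<noteq> 0" "X = pt (w * \<theta>, w ^ q, 0)"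
      unfolding S_theta_def by auto
    then show "X \<in> {pt (\<theta> * u ^ q, u, 0) | u. u \<noteq> 0}"
      using inv by (intro CollectI exI[of _ "1 / w"]) simp
  next
    assume "X \<in> {pt (\<theta> * u ^ q, u, 0) | u. u \<noteq> 0}"
    then obtain u where "u \<noteq> 0" "X = pt (\<theta> * u ^ q, u, 0)"
      by auto
    then show "X \<in> S_theta q \<theta>"
      unfolding S_theta_def using inv[of "1 / u"] by (intro CollectI exI[of _ "1 / u"]) simp
  }
qed

lemma typeIII_line_through_Tpt_iff:
  assumes "q > 0"
  shows "typeIII_line q (d, e, 0) \<longleftrightarrow> field_norm q d + field_norm q e \<noteq> 0"
  using assms by (auto simp: typeIII_line_def det3_def dot3_def cross3_def phi_def field_norm_def
      zero_power mult_ac)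

lemma F_blk_Tpt:
  assumes "q > 0"
  shows "F_blk q Tpt = {pt (d ^ q * (d ^ q) ^ q, e ^ q * (e ^ q) ^ q, - (d ^ q * (e ^ q) ^ q)) | d e.
    field_norm q d + field_norm q e \<noteq> 0}"
proof -
  have "dot3 l Tpt = 0 \<longleftrightarrow> (\<exists>d e. l = (d, e, 0))" for l :: "'a vec3"
    by (cases l) (simp add: dot3_def Tpt_def)
  moreover have "cross3 (phi q (d, e, 0)) (phi q (phi q (d, e, 0)))
      = (d ^ q * (d ^ q) ^ q, e ^ q * (e ^ q) ^ q, - (d ^ q * (e ^ q) ^ q))" for d e :: 'a
    using assms by (simp add: cross3_def phi_def zero_power)
  ultimately show ?thesis
    unfolding F_blk_def by (auto simp: typeIII_line_through_Tpt_iff[OF assms]; blast)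
qed

lemma affine_point_notin_E_blk_Tpt:
  assumes "q > 0"
  shows "pt (x, y, 1) \<notin> E_blk q Tpt"
proof
  assume "pt (x, y, 1) \<in> E_blk q Tpt"
  then obtain w where w: "pt (x, y, 1) = pt w" "dot3 (cross3 (phi q Tpt) (phi q (phi q Tpt))) w = 0"
    unfolding E_blk_def by auto
  obtain a b d where "w = (a, b, d)"
    by (cases w)
  with w assms show False
    by (auto simp: pt_eq_iff cross3_def phi_def Tpt_def dot3_def zero_power)
qed

section \<open>Fields of order q^3\<close>

context
  fixes q :: nat
  assumes prime_power: "\<exists>p k. prime p \<and> k > 0 \<and> q = p ^ k"
    and card_UNIV: "card (UNIV :: 'a::{finite,field} set) = q ^ 3"
begin

lemma q_ge_2: "q \<ge> 2"
proof -
  obtain p k where p: "prime p" and "k > 0" "q = p ^ k"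
    using prime_power by blast
  have "p \<ge> 2"
    using p by (rule prime_ge_2_nat)
  moreover have "p ^ 1 \<le> p ^ k"
    using \<open>k > 0\<close> \<open>p \<ge> 2\<close> by (intro power_increasing) auto
  ultimately show ?thesis
    using \<open>q = p ^ k\<close> by simp
qed

lemma q_pos: "q > 0"
  using q_ge_2 by simp

lemma frob_add: "(a + b :: 'a) ^ q = a ^ q + b ^ q"
proof -
  obtain p k where p: "prime p" and q: "q = p ^ k"
    using prime_power by blast
  have "card (UNIV :: 'a set) = p ^ (k * 3)"
    using card_UNIV by (simp add: q power_mult)
  then have "CHAR('a) = p"
    by (rule CHAR_eq_if_card_eq_prime_power[OF p])
  then show ?thesis
    using p q by (intro freshmans_dream') simp_all
qed

lemma frob_cube: "(((a :: 'a) ^ q) ^ q) ^ q = a"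
proof -
  have "(((a :: 'a) ^ q) ^ q) ^ q = a ^ card (UNIV :: 'a set)"
    by (simp only: card_UNIV power_mult power3_eq_cube mult.assoc)
  then show ?thesis
    by (simp only: power_card_UNIV_eq_self)
qed

lemma frob_minus: "(- a :: 'a) ^ q = - (a ^ q)"
proof -
  have "a ^ q + (- a) ^ q = 0"
    using frob_add[of a "- a"] q_pos by (simp add: zero_power)
  then show ?thesis
    by (simp add: add_eq_0_iff)
qed

lemma frob_diff: "(a - b :: 'a) ^ q = a ^ q - b ^ q"
  using frob_add[of a "- b"] by (simp add: frob_minus)

lemma field_norm_frob: "field_norm q ((a :: 'a) ^ q) = field_norm q a"
  by (simp add: field_norm_def frob_cube mult_ac)

lemma field_norm_minus: "field_norm q (- a :: 'a) = - field_norm q a"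
  by (simp add: field_norm_def frob_minus)

lemma field_norm_in_base_field: "field_norm q (a :: 'a) ^ q = field_norm q a"
  by (metis field_norm_frob field_norm_power)

lemma field_norm_power_q_minus_1:
  assumes "(t :: 'a) \<noteq> 0"
  shows "field_norm q (t ^ (q - 1)) = 1"
proof -
  have "field_norm q t ^ (q - 1) * field_norm q t = 1 * field_norm q t"
    using field_norm_in_base_field q_pos by (simp flip: power_Suc2)
  then show ?thesis
    using assms q_pos by (simp add: field_norm_power field_norm_eq_0_iff)
qed

lemma card_image_power_q_minus_1:
  "q * q + q + 1 \<le> card ((\<lambda>t :: 'a. t ^ (q - 1)) ` (UNIV - {0}))"
proof -
  let ?f = "\<lambda>t :: 'a. t ^ (q - 1)"
  let ?C = "?f ` (UNIV - {0})"
  have "card (UNIV - {0 :: 'a}) \<le> card (\<Union>c\<in>?C. {t. t ^ (q - 1) = c})"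
    by (intro card_mono) auto
  also have "\<dots> \<le> (\<Sum>c\<in>?C. card {t :: 'a. t ^ (q - 1) = c})"
    by (rule card_UN_le) simp
  also have "\<dots> \<le> (\<Sum>c\<in>?C. q - 1)"
    by (intro sum_mono card_power_eq_le) (use q_ge_2 in simp)
  also have "\<dots> = card ?C * (q - 1)"
    by simp
  finally have "q ^ 3 - 1 \<le> card ?C * (q - 1)"
    by (simp add: card_UNIV card_Diff_singleton)
  moreover have "q ^ 3 - 1 = (q * q + q + 1) * (q - 1)"
    using q_pos by (cases q) (simp_all add: power3_eq_cube algebra_simps)
  ultimately have "(q * q + q + 1) * (q - 1) \<le> card ?C * (q - 1)"
    by (simp only:)
  then show ?thesis
    using q_ge_2 by (subst (asm) mult_le_cancel2) simp
qed

lemma hilbert_90: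
  assumes "field_norm q (c :: 'a) = 1"
  shows "\<exists>t. t \<noteq> 0 \<and> c = t ^ (q - 1)"
proof -
  let ?C = "(\<lambda>t :: 'a. t ^ (q - 1)) ` (UNIV - {0})"
  let ?R = "{c :: 'a. c ^ (q * q + q + 1) = 1}"
  have norm_eq: "field_norm q a = a ^ (q * q + q + 1)" for a :: 'a
    by (simp add: field_norm_def power_add power_mult mult_ac)
  have "?C \<subseteq> ?R"
    using field_norm_power_q_minus_1 by (auto simp: norm_eq)
  moreover have "card ?R \<le> card ?C"
    by (rule le_trans[OF card_power_eq_le card_image_power_q_minus_1]) simp
  ultimately have "?C = ?R"
    by (intro card_seteq) simp_all
  then show ?thesis
    using assms by (auto simp: norm_eq)
qed

lemma card_field_norm_eq_1_ge: "q * q + q + 1 \<le> card {c :: 'a. field_norm q c = 1}"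
proof -
  have "(\<lambda>t :: 'a. t ^ (q - 1)) ` (UNIV - {0}) \<subseteq> {c. field_norm q c = 1}"
    using field_norm_power_q_minus_1 by auto
  then show ?thesis
    using card_image_power_q_minus_1 card_mono[OF finite] le_trans by blast
qed

lemma poly_eq_0_if_vanishes_on_field_norm_1:
  assumes "degree p \<le> q * q + q" and "\<And>c. field_norm q c = 1 \<Longrightarrow> poly p (c :: 'a) = 0"
  shows "p = 0"
  using assms card_field_norm_eq_1_ge
  by (intro poly_eqI_degree[where A = "{c. field_norm q c = 1}"]) auto

lemma field_norm_shift_coeffs:
  fixes a b K :: 'a
  assumes shift: "\<And>c. field_norm q c = 1 \<Longrightarrow> field_norm q (c + a) = K * field_norm q (1 + b * c)"
  shows "a ^ q * (a ^ q) ^ q = K * b" and "(a ^ q) ^ q = K * (b * b ^ q)"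
    and "a ^ q = K * (b * (b ^ q) ^ q)" and "a = K * (b ^ q * (b ^ q) ^ q)"
proof -
  (* p is N (c + a) - K N (1 + b c) multiplied out, with the top monomial c c^q c^(q^2) = N c
     replaced by 1 *)
  define p where "p =
    monom (1 + field_norm q a - K - K * field_norm q b) 0 + monom (a ^ q * (a ^ q) ^ q - K * b) 1
    + monom (a * (a ^ q) ^ q - K * b ^ q) q + monom (a * a ^ q - K * (b ^ q) ^ q) (q * q)
    + monom ((a ^ q) ^ q - K * (b * b ^ q)) (1 + q) + monom (a ^ q - K * (b * (b ^ q) ^ q)) (1 + q * q)
    + monom (a - K * (b ^ q * (b ^ q) ^ q)) (q + q * q)"
  have expand: "poly p c + (field_norm q c - 1) * (1 - K * field_norm q b)
      = field_norm q (c + a) - K * field_norm q (1 + b * c)" for c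
    by (simp add: p_def poly_monom power_add power_mult field_norm_def frob_add algebra_simps)
  have "q * q \<ge> 2 * q"
    using q_ge_2 by simp
  then have exps: "q \<noteq> 0" "q \<noteq> 1" "q * q \<noteq> 0" "q * q \<noteq> 1" "q * q \<noteq> q" "q * q \<noteq> 1 + q"
    "q \<noteq> 1 + q * q" "q \<noteq> q + q * q" "1 + q \<noteq> 1 + q * q" "1 + q \<noteq> q + q * q"
    "1 + q * q \<noteq> q + q * q" "q * q \<noteq> q + q * q" "1 \<noteq> q + q * q"
    using q_ge_2 by linarith+
  have "degree p \<le> q * q + q"
    by (rule degree_le) (use q_ge_2 \<open>q * q \<ge> 2 * q\<close> in \<open>auto simp: p_def\<close>)
  moreover have "poly p c = 0" if "field_norm q c = 1" for c
    using expand[of c] shift[OF that] that by simp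
  ultimately have "p = 0"
    by (rule poly_eq_0_if_vanishes_on_field_norm_1)
  then have "coeff p 1 = 0" "coeff p (1 + q) = 0" "coeff p (1 + q * q) = 0" "coeff p (q + q * q) = 0"
    by simp_all
  then show "a ^ q * (a ^ q) ^ q = K * b" and "(a ^ q) ^ q = K * (b * b ^ q)"
    and "a ^ q = K * (b * (b ^ q) ^ q)" and "a = K * (b ^ q * (b ^ q) ^ q)"
    using exps by (simp_all add: p_def exps[symmetric])
qed

lemma field_norm_shift_eq_imp:
  fixes a b K :: 'a
  assumes "K \<noteq> 0"
    and shift: "\<And>c. field_norm q c = 1 \<Longrightarrow> field_norm q (c + a) = K * field_norm q (1 + b * c)"
  shows "a * b = 1 \<or> a = 0 \<and> b = 0"
proof (cases "b = 0")
  case True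
  then show ?thesis
    using field_norm_shift_coeffs(4)[OF shift] q_pos by simp
next
  case False
  note e = field_norm_shift_coeffs[OF shift]
  have "K * b * 1 = a ^ q * (a ^ q) ^ q"
    using e(1) by simp
  also have "\<dots> = K * (b * (b ^ q) ^ q) * (K * (b * b ^ q))"
    by (simp only: e(2), simp only: e(3))
  also have "\<dots> = K * b * (K * field_norm q b)"
    by (simp add: field_norm_def algebra_simps)
  finally have "K * field_norm q b = 1"
    using \<open>K \<noteq> 0\<close> False by simp
  then have "a * b = 1"
    using e(4) by (simp add: field_norm_def algebra_simps)
  then show ?thesis ..
qed

lemma bij_frob_linear:
  assumes "field_norm q y \<noteq> 1"
  shows "bij (\<lambda>t :: 'a. t ^ q - y * (t ^ q) ^ q)"
proof -
  let ?B = "\<lambda>t :: 'a. t ^ q - y * (t ^ q) ^ q"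
  have kernel: "t = 0" if "?B t = 0" for t
  proof -
    have "field_norm q (t ^ q) = field_norm q (y * (t ^ q) ^ q)"
      using that by simp
    then have "(1 - field_norm q y) * field_norm q t = 0"
      by (simp add: field_norm_mult field_norm_frob algebra_simps)
    then show ?thesis
      using assms q_pos by (simp add: field_norm_eq_0_iff)
  qed
  have "inj ?B"
  proof (rule injI)
    fix s t
    assume "?B s = ?B t"
    then have "?B (s - t) = 0"
      by (simp add: frob_diff algebra_simps)
    then show "s = t"
      using kernel[of "s - t"] by simp
  qed
  then show ?thesis
    by (simp add: bij_def finite_UNIV_inj_surj)
qed

lemma F_blk_Tpt_affine_point_imp:
  assumes de: "field_norm q d + field_norm q e \<noteq> 0"
    and "(x, y, 1) = sm3 c (d ^ q * (d ^ q) ^ q, e ^ q * (e ^ q) ^ q, - (d ^ q * (e ^ q) ^ q))"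
  shows "x * y ^ q = 1 \<and> field_norm q (x :: 'a) \<noteq> 1"
proof -
  have x: "x = c * (d ^ q * (d ^ q) ^ q)" and y: "y = c * (e ^ q * (e ^ q) ^ q)"
    and "- (c * (d ^ q * (e ^ q) ^ q)) = 1"
    using assms(2) by auto
  then have m: "c * (d ^ q * (e ^ q) ^ q) = - 1"
    by (metis minus_minus)
  have "x * y ^ q = c * (d ^ q * (e ^ q) ^ q) * (c * (d ^ q * (e ^ q) ^ q)) ^ q"
    by (simp add: x y power_mult_distrib frob_cube mult_ac)
  then have "x * y ^ q = 1"
    by (simp add: m frob_minus)
  moreover have "field_norm q x \<noteq> 1"
  proof
    assume "field_norm q x = 1"
    have "x * (e ^ q) ^ q = c * (d ^ q * (e ^ q) ^ q) * (d ^ q) ^ q"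
      by (simp add: x mult_ac)
    then have "field_norm q (x * (e ^ q) ^ q) = field_norm q (- ((d ^ q) ^ q))"
      by (simp add: m)
    then have "field_norm q x * field_norm q e = - field_norm q d"
      by (simp only: field_norm_mult field_norm_frob field_norm_minus)
    then show False
      using de \<open>field_norm q x = 1\<close> by simp
  qed
  ultimately show ?thesis ..
qed

lemma Fig_Tpt_affine_iff:
  "pt (x, y, 1) \<in> Fig q Tpt \<longleftrightarrow> x * y ^ q = 1 \<and> field_norm q (x :: 'a) \<noteq> 1"
proof
  assume "pt (x, y, 1) \<in> Fig q Tpt"
  then obtain d e c where "field_norm q d + field_norm q e \<noteq> 0"
    and "(x, y, 1) = sm3 c (d ^ q * (d ^ q) ^ q, e ^ q * (e ^ q) ^ q, - (d ^ q * (e ^ q) ^ q))"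
    using affine_point_notin_E_blk_Tpt[OF q_pos, of x y]
    by (auto simp: Fig_def F_blk_Tpt[OF q_pos] pt_eq_iff simp del: sm3_apply)
  then show "x * y ^ q = 1 \<and> field_norm q x \<noteq> 1"
    by (rule F_blk_Tpt_affine_point_imp)
next
  assume xy: "x * y ^ q = 1 \<and> field_norm q x \<noteq> 1"
  have "((x * y ^ q) ^ q) ^ q = 1"
    using xy by simp
  then have yx: "y * (x ^ q) ^ q = 1"
    by (simp add: power_mult_distrib frob_cube mult.commute)
  (* the witness is the line [d, 1, 0] through T *)
  define d where "d = - (x ^ q)"
  have "field_norm q d + field_norm q 1 \<noteq> 0"
    using xy by (simp add: d_def field_norm_minus field_norm_frob)
  moreover have "(x, y, 1) = sm3 y (d ^ q * (d ^ q) ^ q, 1 ^ q * (1 ^ q) ^ q, - (d ^ q * (1 ^ q) ^ q))"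
    using yx by (simp add: d_def frob_minus frob_cube algebra_simps)
  moreover have "y \<noteq> 0"
    using yx by auto
  ultimately have "field_norm q d + field_norm q 1 \<noteq> 0 \<and>
      pt (x, y, 1) = pt (d ^ q * (d ^ q) ^ q, 1 ^ q * (1 ^ q) ^ q, - (d ^ q * (1 ^ q) ^ q))"
    by (metis pt_sm3)
  then show "pt (x, y, 1) \<in> Fig q Tpt"
    unfolding Fig_def F_blk_Tpt[OF q_pos] by blast
qed

lemma proj_set_eq_S_theta_norm_relation:
  assumes "\<theta> \<noteq> 0" and proj: "proj_set q (x, y, 1) = S_theta q \<theta>" and "field_norm q c = (1 :: 'a)"
  shows "1 - (y ^ q) ^ q * c \<noteq> 0"
    and "field_norm q (c - x ^ q) = field_norm q \<theta> * field_norm q (1 - (y ^ q) ^ q * c)"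
proof -
  obtain t where t: "t \<noteq> 0" "c = t ^ (q - 1)"
    using hilbert_90 assms(3) by blast
  have tq: "t ^ q = c * t"
    using power_minus_mult[OF q_pos, of t] t(2) by (simp add: mult.commute)
  define A where "A = t - x * (t ^ q) ^ q"
  define B where "B = t ^ q - y * (t ^ q) ^ q"
  have "pt (A, B, 0) \<in> S_theta q \<theta>"
    unfolding A_def B_def proj[symmetric] proj_set_affine using t(1) by blast
  then obtain u k where "k \<noteq> 0" "u \<noteq> 0" "(A, B, 0) = sm3 k (\<theta> * u ^ q, u, 0)"
    unfolding S_theta_altdef by (auto simp: pt_eq_iff)
  then have "B \<noteq> 0" and AB: "field_norm q A = field_norm q \<theta> * field_norm q B"
    by (auto simp: field_norm_mult field_norm_frob)
  have "A ^ q = t ^ q - x ^ q * t"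
    by (simp add: A_def frob_diff power_mult_distrib frob_cube)
  then have Aq: "A ^ q = t * (c - x ^ q)"
    by (simp add: tq algebra_simps)
  have "(B ^ q) ^ q = t - (y ^ q) ^ q * t ^ q"
    by (simp add: B_def frob_diff power_mult_distrib frob_cube)
  then have Bq: "(B ^ q) ^ q = t * (1 - (y ^ q) ^ q * c)"
    by (simp add: tq algebra_simps)
  show "1 - (y ^ q) ^ q * c \<noteq> 0"
    using \<open>B \<noteq> 0\<close> Bq q_pos by (metis mult_zero_right power_eq_0_iff)
  have "field_norm q t * field_norm q (c - x ^ q) = field_norm q A"
    using arg_cong[OF Aq, of "field_norm q"] by (simp add: field_norm_frob field_norm_mult)
  also have "\<dots> = field_norm q \<theta> * field_norm q B"
    by (rule AB)
  also have "\<dots> = field_norm q t * (field_norm q \<theta> * field_norm q (1 - (y ^ q) ^ q * c))"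
    using arg_cong[OF Bq, of "field_norm q"] by (simp add: field_norm_frob field_norm_mult mult_ac)
  finally show "field_norm q (c - x ^ q) = field_norm q \<theta> * field_norm q (1 - (y ^ q) ^ q * c)"
    using t(1) q_pos by (simp add: field_norm_eq_0_iff)
qed

lemma proj_set_eq_S_theta_imp:
  assumes "\<theta> \<noteq> 0" and "proj_set q (x, y, 1) = S_theta q \<theta>" and "x \<noteq> 0 \<or> y \<noteq> 0"
  shows "x * y ^ q = 1 \<and> field_norm q (x :: 'a) \<noteq> 1"
proof -
  note rel = proj_set_eq_S_theta_norm_relation[OF assms(1,2)]
  have "- (x ^ q) * - ((y ^ q) ^ q) = 1 \<or> - (x ^ q) = 0 \<and> - ((y ^ q) ^ q) = 0"
    using assms(1) q_pos rel(2)
    by (intro field_norm_shift_eq_imp[where K = "field_norm q \<theta>"]) (simp_all add: field_norm_eq_0_iff)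
  then have xy: "x ^ q * (y ^ q) ^ q = 1"
    using assms(3) q_pos by auto
  have "((x ^ q * (y ^ q) ^ q) ^ q) ^ q = x * y ^ q"
    by (simp add: power_mult_distrib frob_cube)
  with xy have "x * y ^ q = 1"
    by simp
  moreover have "field_norm q x \<noteq> 1"
  proof
    assume "field_norm q x = 1"
    then have "1 - (y ^ q) ^ q * x ^ q \<noteq> 0"
      by (intro rel(1)) (simp add: field_norm_frob)
    with xy show False
      by (simp add: mult.commute)
  qed
  ultimately show ?thesis ..
qed

lemma proj_set_affine_eq_S_theta:
  assumes "x * y ^ q = 1" and "field_norm q (x :: 'a) \<noteq> 1"
  shows "proj_set q (x, y, 1) = S_theta q (- x)"
proof -
  define B where "B t = t ^ q - y * (t ^ q) ^ q" for t
  have "field_norm q x * field_norm q y = 1"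
    using arg_cong[OF assms(1), of "field_norm q"] by (simp add: field_norm_mult field_norm_frob)
  then have "field_norm q y \<noteq> 1"
    using assms(2) by auto
  then have "bij B"
    unfolding B_def by (rule bij_frob_linear)
  moreover have "B 0 = 0"
    using q_pos by (simp add: B_def zero_power)
  ultimately have "{pt (- x * B t ^ q, B t, 0) | t. t \<noteq> 0} = {pt (- x * u ^ q, u, 0) | u. u \<noteq> 0}"
    by (rule Setcompr_nonzero_bij[where f = "\<lambda>u. pt (- x * u ^ q, u, 0)"])
  moreover have "t - x * (t ^ q) ^ q = - x * B t ^ q" for t
    using assms(1) by (simp add: B_def frob_diff power_mult_distrib frob_cube algebra_simps)
  ultimately have "proj_set q (x, y, 1) = {pt (- x * u ^ q, u, 0) | u. u \<noteq> 0}"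
    unfolding proj_set_affine B_def by simp
  then show ?thesis
    by (simp only: S_theta_altdef)
qed

lemma T_sls_proj_set_affine_iff:
  assumes "x \<noteq> 0 \<or> y \<noteq> 0"
  shows "T_sls q (proj_set q (x, y, 1)) \<longleftrightarrow> x * y ^ q = 1 \<and> field_norm q (x :: 'a) \<noteq> 1"
proof
  assume "T_sls q (proj_set q (x, y, 1))"
  then show "x * y ^ q = 1 \<and> field_norm q x \<noteq> 1"
    unfolding T_sls_def using proj_set_eq_S_theta_imp[OF _ _ assms] by blast
next
  assume xy: "x * y ^ q = 1 \<and> field_norm q x \<noteq> 1"
  then have "- x \<noteq> 0"
    by auto
  moreover have "proj_set q (x, y, 1) = S_theta q (- x)"
    using xy by (intro proj_set_affine_eq_S_theta) simp_all
  ultimately show "T_sls q (proj_set q (x, y, 1))"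
    unfolding T_sls_def by blast
qed

end

theorem theorem8p1:
  fixes q :: nat and P :: "'a::{finite, field} vec3"
  assumes "\<exists>p k. prime p \<and> k > 0 \<and> q = p ^ k"
    and "card (UNIV :: 'a set) = q ^ 3"
    and "P \<noteq> (0, 0, 0)"
    and "pt P \<noteq> pt Tpt"
    and "dot3 mT P \<noteq> 0"
    and "pt P \<notin> subplane q"
  shows "pt P \<in> Fig q Tpt \<longleftrightarrow> T_sls q (proj_set q P)"
proof -
  obtain a b z where P: "P = (a, b, z)"
    by (cases P)
  have "z \<noteq> 0"
    using assms(5) by (simp add: P dot3_def mT_def)
  define x y where "x = a / z" and "y = b / z"
  have P_affine: "P = sm3 z (x, y, 1)"
    using \<open>z \<noteq> 0\<close> by (simp add: P x_def y_def)
  have "x \<noteq> 0 \<or> y \<noteq> 0"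
  proof (rule ccontr)
    assume "\<not> (x \<noteq> 0 \<or> y \<noteq> 0)"
    then have "P = sm3 z Tpt"
      by (simp add: P_affine Tpt_def)
    then show False
      using assms(4) \<open>z \<noteq> 0\<close> by (metis pt_sm3)
  qed
  have "pt P \<in> Fig q Tpt \<longleftrightarrow> x * y ^ q = 1 \<and> field_norm q x \<noteq> 1"
    unfolding P_affine pt_sm3[OF \<open>z \<noteq> 0\<close>] by (rule Fig_Tpt_affine_iff[OF assms(1,2)])
  also have "\<dots> \<longleftrightarrow> T_sls q (proj_set q P)"
    unfolding P_affine proj_set_sm3[OF \<open>z \<noteq> 0\<close>]
    by (rule T_sls_proj_set_affine_iff[OF assms(1,2) \<open>x \<noteq> 0 \<or> y \<noteq> 0\<close>, symmetric])
  finally show ?thesis .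
qed

end
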